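(* Let $N\in\mathbb N$ and $\alpha_i,p_i\geq1$, $\beta_i>0$ for $i=1,\dots,N$. There is a constant $C=C(\alpha_i,\beta_i,p_i,N)>0$ such that for all real $\tau<\delta$ with $0<\delta-\tau\leq1$ and all $f_i\in L^\infty([\tau,\delta])$, $$\inf_{\ell}\Big\{\sum_{i=1}^N\Big(\int_\tau^\delta|\ell'(s)|^{\alpha_i}|f_i(s)|^{p_i}\,ds\Big)^{1/p_i}\Big\}\leq C(\delta-\tau)^{-\max_i\frac{\alpha_i-1}{p_i}-\frac{1}{\min_i\beta_i}}\sum_{i=1}^N\Big(\int_\tau^\delta|f_i(s)|^{\beta_i}\,ds\Big)^{1/\beta_i},$$ where the infimum is over all $\ell\in C^1([\tau,\delta])$ with $\ell'\leq0$, $\ell(\tau)=1$, $\ell(\delta)=0$. *)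

theory Defs
  imports "HOL-Analysis.Analysis"
begin

definition Linfty_on :: "real \<Rightarrow> real \<Rightarrow> (real \<Rightarrow> real) \<Rightarrow> bool" where
  "Linfty_on a b f \<longleftrightarrow>
     set_borel_measurable lebesgue {a..b} f \<and>
     (\<exists>B. AE s in lebesgue. s \<in> {a..b} \<longrightarrow> \<bar>f s\<bar> \<le> B)"

definition admissible_cutoff ::
  "real \<Rightarrow> real \<Rightarrow> (real \<Rightarrow> real) \<Rightarrow> (real \<Rightarrow> real) \<Rightarrow> bool" where
  "admissible_cutoff a b l l' \<longleftrightarrow>
     (\<forall>s\<in>{a..b}. (l has_real_derivative l' s) (at s within {a..b})) \<and>
     continuous_on {a..b} l' \<and>
     (\<forall>s\<in>{a..b}. l' s \<le> 0) \<and> l a = 1 \<and> l b = 0"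

end

theory Submission
  imports Defs
begin

text \<open>
  By Chebyshev's inequality, the set E of points of [\<tau>, \<delta>] at which every |f_i|^\<beta>_i is at most
  2N/(\<delta> - \<tau>) times its integral has measure at least (\<delta> - \<tau>)/2. The cutoff whose derivative
  is -1_E/|E| has energy \<Sum>_i (|E|^(1 - \<alpha>_i) sup_E |f_i|^p_i)^(1/p_i), which is the claimed bound
  because |E| \<ge> (\<delta> - \<tau>)/2 and \<alpha>_i \<ge> 1. That cutoff is not C^1, so 1_E is replaced by a
  continuous g with values in [0, 1] that agrees with 1_E outside a set of measure \<epsilon>; since the
  f_i are essentially bounded, the energy of the resulting cutoff tends to the ideal one as \<epsilon> \<rightarrow> 0.
\<close>

section \<open>Chebyshev-type estimates\<close>

lemma set_integral_eq_integral_lebesgue_on: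
  fixes F :: "'a::euclidean_space \<Rightarrow> real"
  assumes "S \<in> sets lebesgue"
  shows "(LINT s:S|lebesgue. F s) = integral\<^sup>L (lebesgue_on S) F"
  unfolding set_lebesgue_integral_def using assms by (simp add: integral_restrict_space)

lemma (in finite_measure) measure_above_scaled_integral_le:
  fixes u :: "'a \<Rightarrow> real"
  assumes u: "integrable M u" "AE x in M. 0 \<le> u x" and "0 < t"
  shows "measure M {x\<in>space M. t * integral\<^sup>L M u < u x} \<le> 1 / t"
proof -
  have [measurable]: "u \<in> borel_measurable M"
    using u(1) by blast
  show ?thesis
  proof (cases "integral\<^sup>L M u = 0")
    case True
    then have "AE x in M. u x = 0"
      using u integral_nonneg_eq_0_iff_AE by blast
    then have "{x\<in>space M. t * integral\<^sup>L M u < u x} \<in> null_sets M"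
      using True by (subst AE_iff_null_sets) (auto elim: eventually_mono)
    then show ?thesis
      using \<open>0 < t\<close> by (simp add: measure_eq_0_null_sets)
  next
    case False
    then have c: "0 < t * integral\<^sup>L M u"
      using u \<open>0 < t\<close> integral_nonneg_AE by (metis less_eq_real_def mult_pos_pos)
    have "measure M {x\<in>space M. t * integral\<^sup>L M u < u x} \<le> measure M {x\<in>space M. t * integral\<^sup>L M u \<le> u x}"
      by (intro finite_measure_mono) auto
    also have "\<dots> \<le> integral\<^sup>L M u / (t * integral\<^sup>L M u)"
      using u c by (intro integral_Markov_inequality_measure[OF _ sets.top]) auto
    also have "\<dots> = 1 / t"
      using False by simp
    finally show ?thesis .
  qed
qed

lemma (in finite_measure) measure_below_scaled_integrals_ge:
  fixes u :: "nat \<Rightarrow> 'a \<Rightarrow> real" and N :: nat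
  assumes u: "\<And>i. i < N \<Longrightarrow> integrable M (u i)" "\<And>i. i < N \<Longrightarrow> AE x in M. 0 \<le> u i x" and "0 < c"
  defines "E \<equiv> {x\<in>space M. \<forall>i<N. u i x \<le> N / c * integral\<^sup>L M (u i)}"
  shows "E \<in> sets M" and "measure M (space M) - c \<le> measure M E"
proof -
  define A where "A i = {x\<in>space M. N / c * integral\<^sup>L M (u i) < u i x}" for i
  have A: "A i \<in> sets M" if "i < N" for i
  proof -
    have [measurable]: "u i \<in> borel_measurable M"
      using u(1)[OF that] by blast
    show ?thesis unfolding A_def by measurable
  qed
  have compl: "space M - E = (\<Union>i<N. A i)"
    unfolding E_def A_def by auto
  have "E = space M - (\<Union>i<N. A i)"
    unfolding E_def A_def by auto
  then show E: "E \<in> sets M"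
    using A by auto
  have "measure M (space M - E) \<le> (\<Sum>i<N. measure M (A i))"
    unfolding compl using A by (intro measure_UNION_le) auto
  also have "\<dots> \<le> (\<Sum>i<N. c / N)"
    using u \<open>0 < c\<close> unfolding A_def
    by (intro sum_mono order.trans[OF measure_above_scaled_integral_le]) auto
  also have "\<dots> \<le> c"
    using \<open>0 < c\<close> by simp
  finally show "measure M (space M) - c \<le> measure M E"
    using E by (simp add: finite_measure_Diff sets.sets_into_space)
qed

lemma Linfty_on_measurable: "Linfty_on a b f \<Longrightarrow> f \<in> borel_measurable (lebesgue_on {a..b})"
  unfolding Linfty_on_def set_borel_measurable_def
  by (subst borel_measurable_restrict_space_iff) auto

lemma Linfty_on_AE_bounded:
  assumes "Linfty_on a b f"
  obtains B where "0 \<le> B" "AE x in lebesgue_on {a..b}. \<bar>f x\<bar> \<le> B"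
proof -
  obtain B where "AE x in lebesgue. x \<in> {a..b} \<longrightarrow> \<bar>f x\<bar> \<le> B"
    using assms unfolding Linfty_on_def by blast
  then have "AE x in lebesgue_on {a..b}. \<bar>f x\<bar> \<le> max B 0"
    by (subst AE_restrict_space_iff) (auto elim: eventually_mono)
  then show ?thesis
    using that[of "max B 0"] by simp
qed

lemma Linfty_on_integrable_abs_powr:
  assumes f: "Linfty_on a b f" and "0 \<le> \<beta>"
  shows "integrable (lebesgue_on {a..b}) (\<lambda>x. \<bar>f x\<bar> powr \<beta>)"
proof -
  interpret finite_measure "lebesgue_on {a..b}"
    by (rule finite_measure_lebesgue_on) auto
  obtain B where "AE x in lebesgue_on {a..b}. \<bar>f x\<bar> \<le> B"
    using Linfty_on_AE_bounded[OF f] by blast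
  then have "AE x in lebesgue_on {a..b}. norm (\<bar>f x\<bar> powr \<beta>) \<le> B powr \<beta>"
    using \<open>0 \<le> \<beta>\<close> by (auto elim!: eventually_mono intro: powr_mono2)
  moreover have "(\<lambda>x. \<bar>f x\<bar> powr \<beta>) \<in> borel_measurable (lebesgue_on {a..b})"
    using Linfty_on_measurable[OF f] by measurable
  ultimately show ?thesis
    by (rule integrable_const_bound)
qed

lemma exists_large_subset_below_scaled_means:
  fixes u :: "nat \<Rightarrow> real \<Rightarrow> real" and N :: nat
  assumes "a < b" and u: "\<And>i. i < N \<Longrightarrow> integrable (lebesgue_on {a..b}) (u i)" "\<And>i x. 0 \<le> u i x"
  obtains E where "E \<in> sets lebesgue" "E \<subseteq> {a..b}" "(b - a) / 2 \<le> measure lebesgue E"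
    "\<And>i x. i < N \<Longrightarrow> x \<in> E \<Longrightarrow> u i x \<le> 2 * real N / (b - a) * (LINT s:{a..b}|lebesgue. u i s)"
proof -
  define M where "M = lebesgue_on {a..b}"
  interpret finite_measure M
    unfolding M_def by (rule finite_measure_lebesgue_on) auto
  define E where "E = {x\<in>space M. \<forall>i<N. u i x \<le> N / ((b - a) / 2) * integral\<^sup>L M (u i)}"
  have E: "E \<in> sets M" "measure M (space M) - (b - a) / 2 \<le> measure M E"
    unfolding E_def
    by (rule measure_below_scaled_integrals_ge; use u \<open>a < b\<close> in \<open>simp add: M_def\<close>)+
  have "E \<subseteq> {a..b}"
    unfolding E_def M_def by auto
  moreover have "E \<in> sets lebesgue"
    using E(1) unfolding M_def by (simp add: sets_restrict_space_iff)
  moreover have "(b - a) / 2 \<le> measure lebesgue E"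
    using E(2) \<open>a < b\<close> \<open>E \<subseteq> {a..b}\<close> unfolding M_def by (simp add: measure_restrict_space field_simps)
  moreover have "u i x \<le> 2 * real N / (b - a) * (LINT s:{a..b}|lebesgue. u i s)" if "i < N" "x \<in> E" for i x
    using that unfolding E_def M_def by (simp add: set_integral_eq_integral_lebesgue_on mult_ac)
  ultimately show ?thesis
    using that by blast
qed

section \<open>Continuous approximation of indicator functions\<close>

lemma continuous_approx_indicator:
  fixes S :: "'a::euclidean_space set"
  assumes S: "S \<in> sets lebesgue" and "0 < e"
  obtains g :: "'a \<Rightarrow> real" and D where "continuous_on UNIV g" "\<And>x. 0 \<le> g x" "\<And>x. g x \<le> 1"
    "D \<in> lmeasurable" "measure lebesgue D < e" "\<And>x. x \<notin> D \<Longrightarrow> g x = indicator S x"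
proof -
  obtain T where T: "closed T" "T \<subseteq> S" "S - T \<in> lmeasurable"
    and ST: "emeasure lebesgue (S - T) < ennreal (e/2)"
    using sets_lebesgue_inner_closed[OF S, of "e/2"] \<open>0 < e\<close> by auto
  obtain U where U: "open U" "S \<subseteq> U" "U - S \<in> lmeasurable"
    and US: "emeasure lebesgue (U - S) < ennreal (e/2)"
    using sets_lebesgue_outer_open[OF S, of "e/2"] \<open>0 < e\<close> by auto
  \<comment> \<open>The indicator of S is 1 on T and 0 on -U, two disjoint closed sets; Tietze extends it.\<close>
  have "continuous_on (T \<union> -U) (indicat_real S)"
    by (rule continuous_on_eq[OF continuous_on_cases[of T "-U" "\<lambda>_. 1" "\<lambda>_. 0" "\<lambda>x. x \<in> T"]])
       (use T U in \<open>auto simp: indicator_def\<close>)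
  moreover have "closedin (top_of_set UNIV) (T \<union> -U)"
    using T U by auto
  ultimately obtain g where g: "continuous_on UNIV g" "\<And>x. x \<in> T \<union> -U \<Longrightarrow> g x = indicat_real S x"
      "\<And>x. g x \<in> cbox 0 1"
    by (rule Tietze_closed_interval_1[of _ _ _ 0 1]) (auto simp: indicator_def)
  have "measure lebesgue ((S - T) \<union> (U - S)) \<le> measure lebesgue (S - T) + measure lebesgue (U - S)"
    using T U by (intro measure_Un_le) auto
  also have "\<dots> < e"
    using ST US T(3) U(3) by (simp add: emeasure_eq_measure2 ennreal_less_iff)
  finally show ?thesis
    using that[of g "(S - T) \<union> (U - S)"] g T U by auto
qed

lemma (in finite_measure) approx_indicator_integral_ge:
  fixes g :: "'a \<Rightarrow> real"
  assumes sets: "E \<in> sets M" "D \<in> sets M" and g: "g \<in> borel_measurable M" "\<And>x. 0 \<le> g x" "\<And>x. g x \<le> 1"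
    and gE: "\<And>x. x \<in> space M - D \<Longrightarrow> g x = indicator E x"
  shows "measure M E - measure M D \<le> integral\<^sup>L M g"
proof -
  have "measure M E - measure M D = integral\<^sup>L M (\<lambda>x. indicator E x - indicator D x)"
    using sets by (simp add: Bochner_Integration.integral_diff emeasure_real less_top[symmetric])
  also have "\<dots> \<le> integral\<^sup>L M g"
    using sets g gE
    by (intro integral_mono Bochner_Integration.integrable_diff integrable_const_bound[of _ 1])
       (auto simp: indicator_def intro: order.trans[OF _ g(2)])
  finally show ?thesis .
qed

lemma (in finite_measure) approx_indicator_weighted_integral_le:
  fixes g w :: "'a \<Rightarrow> real"
  assumes sets: "E \<in> sets M" "D \<in> sets M" and g: "\<And>x. 0 \<le> g x" "\<And>x. g x \<le> 1"
    and gE: "\<And>x. x \<in> space M - D \<Longrightarrow> g x = indicator E x"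
    and \<alpha>: "0 < \<alpha>" and QB: "0 \<le> Q" "0 \<le> B"
    and w: "\<And>x. 0 \<le> w x" "\<And>x. x \<in> E \<Longrightarrow> w x \<le> Q" "AE x in M. w x \<le> B"
  shows "integral\<^sup>L M (\<lambda>x. g x powr \<alpha> * w x) \<le> Q * measure M E + B * measure M D"
proof -
  have "integral\<^sup>L M (\<lambda>x. g x powr \<alpha> * w x) \<le> integral\<^sup>L M (\<lambda>x. Q * indicator E x + B * indicator D x)"
  proof (rule integral_mono_AE')
    show "AE x in M. g x powr \<alpha> * w x \<le> Q * indicator E x + B * indicator D x"
      using w(3) AE_space
    proof eventually_elim
      case (elim x)
      have "g x powr \<alpha> * w x \<le> 1 * B"
        using g w(1) elim \<alpha> by (intro mult_mono) (auto intro: powr_le1)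
      then show ?case
        using gE[of x] w(1,2)[of x] elim QB by (cases "x \<in> D") (auto simp: indicator_def)
    qed
  qed (use sets QB in \<open>auto simp: emeasure_real less_top[symmetric]\<close>)
  also have "\<dots> = Q * measure M E + B * measure M D"
    using sets by (simp add: emeasure_real less_top[symmetric])
  finally show ?thesis .
qed

lemma approx_indicator_integrals_on_interval:
  fixes g :: "real \<Rightarrow> real" and E D :: "real set"
  assumes E: "E \<in> sets lebesgue" "E \<subseteq> {a..b}" and D: "D \<in> lmeasurable"
    and g: "continuous_on {a..b} g" "\<And>x. 0 \<le> g x" "\<And>x. g x \<le> 1"
    and gE: "\<And>x. x \<notin> D \<Longrightarrow> g x = indicator E x"
  shows "measure lebesgue E - measure lebesgue D \<le> integral {a..b} g"
    and "\<And>\<alpha> w Q B. 0 < \<alpha> \<Longrightarrow> 0 \<le> Q \<Longrightarrow> 0 \<le> B \<Longrightarrow> (\<And>x. 0 \<le> w x) \<Longrightarrow> (\<And>x. x \<in> E \<Longrightarrow> w x \<le> Q) \<Longrightarrow>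
           (AE x in lebesgue_on {a..b}. w x \<le> B) \<Longrightarrow>
           (LINT s:{a..b}|lebesgue. g s powr \<alpha> * w s) \<le> Q * measure lebesgue E + B * measure lebesgue D"
proof -
  define M where "M = lebesgue_on {a..b}"
  interpret finite_measure M
    unfolding M_def by (rule finite_measure_lebesgue_on) auto
  have sets: "E \<in> sets M" "D \<inter> {a..b} \<in> sets M"
    using E D unfolding M_def by (auto simp: sets_restrict_space_iff)
  have mE: "measure M E = measure lebesgue E"
    using E unfolding M_def by (intro measure_restrict_space) auto
  have "measure lebesgue (D \<inter> {a..b}) \<le> measure lebesgue D"
    using D by (intro measure_mono_fmeasurable) auto
  then have mD: "measure M (D \<inter> {a..b}) \<le> measure lebesgue D"
    using D unfolding M_def by (subst measure_restrict_space) auto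
  have gE': "g x = indicator E x" if "x \<in> space M - D \<inter> {a..b}" for x
    using gE that by (auto simp: M_def)
  have "g absolutely_integrable_on {a..b}"
    using g(1) by (rule absolutely_integrable_continuous_real)
  then have "integral {a..b} g = integral\<^sup>L M g"
    unfolding M_def by (simp add: set_lebesgue_integral_eq_integral(2)[symmetric] set_integral_eq_integral_lebesgue_on)
  moreover have "g \<in> borel_measurable M"
    unfolding M_def using g(1) by (rule continuous_imp_measurable_on_sets_lebesgue) simp
  then have "measure M E - measure M (D \<inter> {a..b}) \<le> integral\<^sup>L M g"
    by (rule approx_indicator_integral_ge[OF sets]) (use g gE' in auto)
  ultimately show "measure lebesgue E - measure lebesgue D \<le> integral {a..b} g"
    using mE mD by linarith
  show "(LINT s:{a..b}|lebesgue. g s powr \<alpha> * w s) \<le> Q * measure lebesgue E + B * measure lebesgue D"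
    if "0 < \<alpha>" "0 \<le> Q" "0 \<le> B" "\<And>x. 0 \<le> w x" "\<And>x. x \<in> E \<Longrightarrow> w x \<le> Q"
      "AE x in lebesgue_on {a..b}. w x \<le> B" for \<alpha> w Q B
  proof -
    have "integral\<^sup>L M (\<lambda>s. g s powr \<alpha> * w s) \<le> Q * measure M E + B * measure M (D \<inter> {a..b})"
      by (rule approx_indicator_weighted_integral_le[OF sets]) (use g gE' that(1-5) that(6)[folded M_def] in auto)
    also have "\<dots> \<le> Q * measure lebesgue E + B * measure lebesgue D"
      using mE mD \<open>0 \<le> B\<close> by (simp add: mult_left_mono)
    finally show ?thesis
      unfolding M_def by (simp add: set_integral_eq_integral_lebesgue_on)
  qed
qed

section \<open>Cutoffs concentrated on a set\<close>

lemma admissible_cutoff_normalized_primitive: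
  fixes g :: "real \<Rightarrow> real"
  assumes g: "continuous_on {a..b} g" "\<And>s. s \<in> {a..b} \<Longrightarrow> 0 \<le> g s"
    and G: "0 < integral {a..b} g"
  shows "admissible_cutoff a b (\<lambda>s. 1 - integral {a..s} g / integral {a..b} g)
           (\<lambda>s. - g s / integral {a..b} g)"
  unfolding admissible_cutoff_def
proof (intro conjI ballI)
  fix s assume s: "s \<in> {a..b}"
  have "((\<lambda>u. integral {a..u} g) has_real_derivative g s) (at s within {a..b})"
    using integral_has_vector_derivative[OF g(1) s]
    by (simp add: has_real_derivative_iff_has_vector_derivative)
  then show "((\<lambda>s. 1 - integral {a..s} g / integral {a..b} g) has_real_derivative
      - g s / integral {a..b} g) (at s within {a..b})"
    using DERIV_diff[OF DERIV_const DERIV_cdivide] by fastforce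
  show "- g s / integral {a..b} g \<le> 0"
    using g(2)[OF s] G by simp
qed (use g G in \<open>auto intro!: continuous_intros\<close>)

lemma exists_cutoff_concentrated_on:
  fixes E :: "real set" and \<epsilon> :: real
  assumes E: "E \<in> sets lebesgue" "E \<subseteq> {a..b}" and \<epsilon>: "0 < \<epsilon>" "\<epsilon> < measure lebesgue E"
  obtains l l' where "admissible_cutoff a b l l'"
    "\<And>\<alpha> w Q B. 0 < \<alpha> \<Longrightarrow> 0 \<le> B \<Longrightarrow> (\<And>x. 0 \<le> w x) \<Longrightarrow> (\<And>x. x \<in> E \<Longrightarrow> w x \<le> Q) \<Longrightarrow>
       (AE x in lebesgue_on {a..b}. w x \<le> B) \<Longrightarrow>
       (LINT s:{a..b}|lebesgue. \<bar>l' s\<bar> powr \<alpha> * w s)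
         \<le> (measure lebesgue E - \<epsilon>) powr (-\<alpha>) * (Q * measure lebesgue E + B * \<epsilon>)"
proof -
  obtain g :: "real \<Rightarrow> real" and D where g: "continuous_on UNIV g" "\<And>x. 0 \<le> g x" "\<And>x. g x \<le> 1"
    and D: "D \<in> lmeasurable" "measure lebesgue D < \<epsilon>" and gE: "\<And>x. x \<notin> D \<Longrightarrow> g x = indicator E x"
    using continuous_approx_indicator[OF E(1) \<epsilon>(1)] by blast
  have g_ab: "continuous_on {a..b} g"
    using g(1) by (rule continuous_on_subset) simp
  define m where "m = measure lebesgue E"
  define G where "G = integral {a..b} g"
  have "m - measure lebesgue D \<le> G"
    unfolding m_def G_def
    by (rule approx_indicator_integrals_on_interval(1)) (use E D g_ab g gE in auto)
  then have G_gt: "m - \<epsilon> < G"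
    using D(2) by linarith
  have "admissible_cutoff a b (\<lambda>s. 1 - integral {a..s} g / G) (\<lambda>s. - g s / G)"
    unfolding G_def using g_ab g(2) G_gt \<epsilon>(2)
    by (intro admissible_cutoff_normalized_primitive) (auto simp: m_def G_def)
  moreover have "(LINT s:{a..b}|lebesgue. \<bar>- g s / G\<bar> powr \<alpha> * w s) \<le> (m - \<epsilon>) powr (-\<alpha>) * (Q * m + B * \<epsilon>)"
    if \<alpha>: "0 < \<alpha>" and B: "0 \<le> B" and w: "\<And>x. 0 \<le> w x" "\<And>x. x \<in> E \<Longrightarrow> w x \<le> Q"
      and wB: "AE x in lebesgue_on {a..b}. w x \<le> B" for \<alpha> w Q B
  proof -
    have "E \<noteq> {}" using \<epsilon> by auto
    then have Q: "0 \<le> Q" using w by (meson ex_in_conv order.trans)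
    have "(LINT s:{a..b}|lebesgue. \<bar>- g s / G\<bar> powr \<alpha> * w s)
        = G powr (-\<alpha>) * (LINT s:{a..b}|lebesgue. g s powr \<alpha> * w s)"
      using g(2) G_gt \<epsilon>(2)
      by (simp add: set_integral_eq_integral_lebesgue_on powr_divide powr_minus_divide m_def)
    also have "\<dots> \<le> G powr (-\<alpha>) * (Q * m + B * measure lebesgue D)"
      unfolding m_def
      by (intro mult_left_mono approx_indicator_integrals_on_interval(2)) (use E D g_ab g gE \<alpha> Q B w wB in auto)
    also have "\<dots> \<le> G powr (-\<alpha>) * (Q * m + B * \<epsilon>)"
      using D(2) B by (intro mult_left_mono add_left_mono) auto
    also have "\<dots> \<le> (m - \<epsilon>) powr (-\<alpha>) * (Q * m + B * \<epsilon>)"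
      using G_gt \<epsilon> \<alpha> Q B by (intro mult_right_mono powr_mono2') (auto simp: m_def)
    finally show ?thesis .
  qed
  ultimately show ?thesis
    using that unfolding m_def by auto
qed

lemma Inf_cutoff_energies_le_approx:
  fixes f :: "nat \<Rightarrow> real \<Rightarrow> real" and \<alpha> p Q B :: "nat \<Rightarrow> real" and E :: "real set"
  assumes \<alpha>: "\<And>i. i < N \<Longrightarrow> 0 < \<alpha> i" and p: "\<And>i. i < N \<Longrightarrow> 0 < p i"
    and B: "\<And>i. i < N \<Longrightarrow> 0 \<le> B i" "\<And>i. i < N \<Longrightarrow> AE x in lebesgue_on {a..b}. \<bar>f i x\<bar> \<le> B i"
    and E: "E \<in> sets lebesgue" "E \<subseteq> {a..b}" and \<epsilon>: "0 < \<epsilon>" "\<epsilon> < measure lebesgue E"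
    and Q: "\<And>i x. i < N \<Longrightarrow> x \<in> E \<Longrightarrow> \<bar>f i x\<bar> powr p i \<le> Q i"
  shows "Inf {(\<Sum>i<N. (LINT s:{a..b}|lebesgue. \<bar>l' s\<bar> powr \<alpha> i * \<bar>f i s\<bar> powr p i) powr (1 / p i))
               | l l'. admissible_cutoff a b l l'}
         \<le> (\<Sum>i<N. ((measure lebesgue E - \<epsilon>) powr (- \<alpha> i) * (Q i * measure lebesgue E + B i powr p i * \<epsilon>))
                    powr (1 / p i))"
    (is "Inf ?S \<le> ?\<Phi>")
proof -
  obtain l l' where "admissible_cutoff a b l l'" and energy:
    "\<And>\<alpha> w Q B. 0 < \<alpha> \<Longrightarrow> 0 \<le> B \<Longrightarrow> (\<And>x. 0 \<le> w x) \<Longrightarrow> (\<And>x. x \<in> E \<Longrightarrow> w x \<le> Q) \<Longrightarrow>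
       (AE x in lebesgue_on {a..b}. w x \<le> B) \<Longrightarrow>
       (LINT s:{a..b}|lebesgue. \<bar>l' s\<bar> powr \<alpha> * w s)
         \<le> (measure lebesgue E - \<epsilon>) powr (-\<alpha>) * (Q * measure lebesgue E + B * \<epsilon>)"
    using exists_cutoff_concentrated_on[OF E \<epsilon>] by blast
  have "(\<Sum>i<N. (LINT s:{a..b}|lebesgue. \<bar>l' s\<bar> powr \<alpha> i * \<bar>f i s\<bar> powr p i) powr (1 / p i)) \<in> ?S"
    using \<open>admissible_cutoff a b l l'\<close> by blast
  moreover have "bdd_below ?S"
    by (rule bdd_belowI[of _ 0]) (auto intro!: sum_nonneg)
  moreover have "(\<Sum>i<N. (LINT s:{a..b}|lebesgue. \<bar>l' s\<bar> powr \<alpha> i * \<bar>f i s\<bar> powr p i) powr (1 / p i)) \<le> ?\<Phi>"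
  proof (intro sum_mono powr_mono2)
    fix i assume i: "i \<in> {..<N}"
    have "AE x in lebesgue_on {a..b}. \<bar>f i x\<bar> powr p i \<le> B i powr p i"
      using B(2)[of i] p[of i] i by (auto elim!: eventually_mono intro: powr_mono2)
    then show "(LINT s:{a..b}|lebesgue. \<bar>l' s\<bar> powr \<alpha> i * \<bar>f i s\<bar> powr p i)
        \<le> (measure lebesgue E - \<epsilon>) powr (- \<alpha> i) * (Q i * measure lebesgue E + B i powr p i * \<epsilon>)"
      using i by (intro energy \<alpha> Q) auto
    show "0 \<le> (LINT s:{a..b}|lebesgue. \<bar>l' s\<bar> powr \<alpha> i * \<bar>f i s\<bar> powr p i)"
      by (simp add: set_integral_eq_integral_lebesgue_on)
    show "0 \<le> 1 / p i"
      using p[of i] i by simp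
  qed
  ultimately show ?thesis
    by (meson cInf_lower order.trans)
qed

lemma Inf_cutoff_energies_le:
  fixes f :: "nat \<Rightarrow> real \<Rightarrow> real" and \<alpha> p Q :: "nat \<Rightarrow> real" and E :: "real set"
  assumes \<alpha>: "\<And>i. i < N \<Longrightarrow> 0 < \<alpha> i" and p: "\<And>i. i < N \<Longrightarrow> 0 < p i"
    and f: "\<And>i. i < N \<Longrightarrow> Linfty_on a b (f i)"
    and E: "E \<in> sets lebesgue" "E \<subseteq> {a..b}" "0 < measure lebesgue E"
    and Q: "\<And>i x. i < N \<Longrightarrow> x \<in> E \<Longrightarrow> \<bar>f i x\<bar> powr p i \<le> Q i"
  shows "Inf {(\<Sum>i<N. (LINT s:{a..b}|lebesgue. \<bar>l' s\<bar> powr \<alpha> i * \<bar>f i s\<bar> powr p i) powr (1 / p i))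
               | l l'. admissible_cutoff a b l l'}
         \<le> (\<Sum>i<N. (Q i * measure lebesgue E powr (1 - \<alpha> i)) powr (1 / p i))"
    (is "Inf ?S \<le> _")
proof -
  define m where "m = measure lebesgue E"
  have "\<exists>B. i < N \<longrightarrow> 0 \<le> B \<and> (AE x in lebesgue_on {a..b}. \<bar>f i x\<bar> \<le> B)" for i
    using Linfty_on_AE_bounded[OF f] by blast
  then obtain B where B: "\<And>i. i < N \<Longrightarrow> 0 \<le> B i" "\<And>i. i < N \<Longrightarrow> AE x in lebesgue_on {a..b}. \<bar>f i x\<bar> \<le> B i"
    by metis
  obtain x0 where "x0 \<in> E"
    using E(3) by (metis equals0I measure_empty order_less_irrefl)
  then have Q0: "0 \<le> Q i" if "i < N" for i
    using Q[OF that] by (meson order.trans powr_ge_zero)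
  define \<Phi> where "\<Phi> \<epsilon> = (\<Sum>i<N. ((m - \<epsilon>) powr (- \<alpha> i) * (Q i * m + B i powr p i * \<epsilon>)) powr (1 / p i))" for \<epsilon>
  have "(\<Phi> \<longlongrightarrow> \<Phi> 0) (at_right 0)"
    unfolding \<Phi>_def
  proof (intro tendsto_sum tendsto_powr' tendsto_intros)
    fix i assume i: "i \<in> {..<N}"
    have "\<forall>\<^sub>F \<epsilon> in at_right 0. 0 \<le> (m - \<epsilon>) powr (- \<alpha> i) * (Q i * m + B i powr p i * \<epsilon>)"
      unfolding eventually_at_right_field using Q0 B(1) i E(3)
      by (intro exI[of _ 1]) (auto simp: m_def)
    then show "(m - 0) powr (- \<alpha> i) * (Q i * m + B i powr p i * 0) \<noteq> 0 \<or>
        0 < 1 / p i \<and> (\<forall>\<^sub>F \<epsilon> in at_right 0. 0 \<le> (m - \<epsilon>) powr (- \<alpha> i) * (Q i * m + B i powr p i * \<epsilon>))"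
      using p i by auto
  qed (use E(3) p in \<open>auto simp: m_def\<close>)
  moreover have "\<forall>\<^sub>F \<epsilon> in at_right 0. Inf ?S \<le> \<Phi> \<epsilon>"
    unfolding eventually_at_right_field \<Phi>_def m_def
    using Inf_cutoff_energies_le_approx[OF \<alpha> p B E(1,2) _ _ Q] E(3) by auto
  ultimately have "Inf ?S \<le> \<Phi> 0"
    by (rule tendsto_lowerbound) simp
  also have "\<Phi> 0 = (\<Sum>i<N. (Q i * m powr (1 - \<alpha> i)) powr (1 / p i))"
    unfolding \<Phi>_def using E(3) by (simp add: m_def powr_diff powr_minus divide_inverse mult_ac)
  finally show ?thesis unfolding m_def .
qed

section \<open>Dependence on the length of the interval\<close>

lemma cutoff_energy_term_le:
  fixes h m n K \<alpha> \<beta> p e :: real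
  assumes h: "0 < h" "h \<le> 1" "h / 2 \<le> m" and "1 \<le> \<alpha>" "0 < p" "0 < \<beta>" "0 \<le> n" "0 \<le> K"
    and e: "e \<le> - ((\<alpha> - 1) / p) - 1 / \<beta>"
  shows "((K / h * n) powr (p / \<beta>) * m powr (1 - \<alpha>)) powr (1 / p)
    \<le> 2 powr ((\<alpha> - 1) / p) * K powr (1 / \<beta>) * h powr e * n powr (1 / \<beta>)"
proof -
  have "((K / h * n) powr (p / \<beta>) * m powr (1 - \<alpha>)) powr (1 / p)
      = (K / h * n) powr (1 / \<beta>) * m powr ((1 - \<alpha>) / p)"
    using assms by (simp add: powr_mult powr_powr)
  also have "\<dots> \<le> (K / h * n) powr (1 / \<beta>) * (h / 2) powr ((1 - \<alpha>) / p)"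
    using assms by (intro mult_left_mono powr_mono2') (auto simp: divide_nonpos_pos)
  also have "\<dots> = 2 powr ((\<alpha> - 1) / p) * K powr (1 / \<beta>) * h powr (- ((\<alpha> - 1) / p) - 1 / \<beta>) * n powr (1 / \<beta>)"
  proof -
    have "(h / 2) powr ((1 - \<alpha>) / p) = h powr ((1 - \<alpha>) / p) * inverse (2 powr ((1 - \<alpha>) / p))"
      using h powr_divide[of h 2 "(1 - \<alpha>) / p"] by (simp only: divide_inverse)
    also have "inverse (2 powr ((1 - \<alpha>) / p)) = 2 powr ((\<alpha> - 1) / p)"
      by (metis minus_diff_eq minus_divide_left powr_minus)
    finally have "(h / 2) powr ((1 - \<alpha>) / p) = 2 powr ((\<alpha> - 1) / p) * h powr ((1 - \<alpha>) / p)"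
      by (simp only: mult.commute)
    moreover have "(K / h * n) powr (1 / \<beta>) = K powr (1 / \<beta>) * n powr (1 / \<beta>) * h powr (- 1 / \<beta>)"
      using assms by (simp add: powr_mult powr_divide powr_minus_divide)
    moreover have "h powr ((1 - \<alpha>) / p) * h powr (- 1 / \<beta>) = h powr (- ((\<alpha> - 1) / p) - 1 / \<beta>)"
      using powr_add[of h "(1 - \<alpha>) / p" "- 1 / \<beta>"] by (simp add: diff_divide_distrib)
    ultimately show ?thesis
      by (simp add: mult_ac)
  qed
  also have "\<dots> \<le> 2 powr ((\<alpha> - 1) / p) * K powr (1 / \<beta>) * h powr e * n powr (1 / \<beta>)"
    using h e by (intro mult_left_mono mult_right_mono powr_mono') auto
  finally show ?thesis .
qed

lemma neg_Max_minus_inverse_Min_le: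
  fixes x y :: "nat \<Rightarrow> real"
  assumes "i < N" and y: "\<And>i. i < N \<Longrightarrow> 0 < y i"
  shows "- (MAX i\<in>{..<N}. x i) - 1 / (MIN i\<in>{..<N}. y i) \<le> - x i - 1 / y i"
proof -
  have "0 < (MIN i\<in>{..<N}. y i)"
    using assms by (subst Min_gr_iff) auto
  moreover have "(MIN i\<in>{..<N}. y i) \<le> y i"
    using assms by (intro Min_le) auto
  ultimately have "1 / y i \<le> 1 / (MIN i\<in>{..<N}. y i)"
    by (intro divide_left_mono) auto
  moreover have "x i \<le> (MAX i\<in>{..<N}. x i)"
    using assms by (intro Max_ge) auto
  ultimately show ?thesis
    by linarith
qed

lemma Inf_cutoff_energies_le_powr:
  fixes f :: "nat \<Rightarrow> real \<Rightarrow> real" and \<alpha> \<beta> p :: "nat \<Rightarrow> real" and C e :: real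
  assumes \<alpha>: "\<And>i. i < N \<Longrightarrow> 1 \<le> \<alpha> i" and p: "\<And>i. i < N \<Longrightarrow> 0 < p i" and \<beta>: "\<And>i. i < N \<Longrightarrow> 0 < \<beta> i"
    and e: "\<And>i. i < N \<Longrightarrow> e \<le> - ((\<alpha> i - 1) / p i) - 1 / \<beta> i"
    and C: "\<And>i. i < N \<Longrightarrow> 2 powr ((\<alpha> i - 1) / p i) * (2 * real N) powr (1 / \<beta> i) \<le> C"
    and h: "a < b" "b - a \<le> 1" and f: "\<And>i. i < N \<Longrightarrow> Linfty_on a b (f i)"
  shows "Inf {(\<Sum>i<N. (LINT s:{a..b}|lebesgue. \<bar>l' s\<bar> powr \<alpha> i * \<bar>f i s\<bar> powr p i) powr (1 / p i))
               | l l'. admissible_cutoff a b l l'}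
         \<le> C * (b - a) powr e * (\<Sum>i<N. (LINT s:{a..b}|lebesgue. \<bar>f i s\<bar> powr \<beta> i) powr (1 / \<beta> i))"
proof -
  define n where "n i = (LINT s:{a..b}|lebesgue. \<bar>f i s\<bar> powr \<beta> i)" for i
  have n: "0 \<le> n i" for i
    unfolding n_def by (simp add: set_integral_eq_integral_lebesgue_on)
  obtain E where E: "E \<in> sets lebesgue" "E \<subseteq> {a..b}" "(b - a) / 2 \<le> measure lebesgue E"
    and below: "\<And>i x. i < N \<Longrightarrow> x \<in> E \<Longrightarrow> \<bar>f i x\<bar> powr \<beta> i \<le> 2 * real N / (b - a) * n i"
    using exists_large_subset_below_scaled_means[of a b N "\<lambda>i s. \<bar>f i s\<bar> powr \<beta> i"] h(1) f
      Linfty_on_integrable_abs_powr \<beta> unfolding n_def by (metis less_imp_le powr_ge_zero)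
  have Q: "\<bar>f i x\<bar> powr p i \<le> (2 * real N / (b - a) * n i) powr (p i / \<beta> i)" if "i < N" "x \<in> E" for i x
  proof -
    have "\<bar>f i x\<bar> powr p i = (\<bar>f i x\<bar> powr \<beta> i) powr (p i / \<beta> i)"
      using \<beta>[OF that(1)] by (simp add: powr_powr)
    also have "\<dots> \<le> (2 * real N / (b - a) * n i) powr (p i / \<beta> i)"
      using below[OF that] p[OF that(1)] \<beta>[OF that(1)] by (intro powr_mono2) auto
    finally show ?thesis .
  qed
  have "0 < \<alpha> i" if "i < N" for i
    using \<alpha>[OF that] by linarith
  then have "Inf {(\<Sum>i<N. (LINT s:{a..b}|lebesgue. \<bar>l' s\<bar> powr \<alpha> i * \<bar>f i s\<bar> powr p i) powr (1 / p i))
               | l l'. admissible_cutoff a b l l'}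
      \<le> (\<Sum>i<N. ((2 * real N / (b - a) * n i) powr (p i / \<beta> i) * measure lebesgue E powr (1 - \<alpha> i)) powr (1 / p i))"
    using p f E h Q by (intro Inf_cutoff_energies_le) auto
  also have "\<dots> \<le> (\<Sum>i<N. C * (b - a) powr e * n i powr (1 / \<beta> i))"
  proof (intro sum_mono order.trans[OF cutoff_energy_term_le])
    fix i assume "i \<in> {..<N}"
    then show "2 powr ((\<alpha> i - 1) / p i) * (2 * real N) powr (1 / \<beta> i) * (b - a) powr e * n i powr (1 / \<beta> i)
        \<le> C * (b - a) powr e * n i powr (1 / \<beta> i)"
      using C by (intro mult_right_mono) auto
  qed (use h E n \<alpha> p \<beta> e in auto)
  also have "\<dots> = C * (b - a) powr e * (\<Sum>i<N. n i powr (1 / \<beta> i))"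
    by (simp add: sum_distrib_left)
  finally show ?thesis
    unfolding n_def .
qed

theorem lemma2p3:
  fixes N :: nat and \<alpha> \<beta> p :: "nat \<Rightarrow> real"
  assumes "\<And>i. i < N \<Longrightarrow> \<alpha> i \<ge> 1"
      and "\<And>i. i < N \<Longrightarrow> p i \<ge> 1"
      and "\<And>i. i < N \<Longrightarrow> \<beta> i > 0"
  shows "\<exists>C>0. \<forall>\<tau> \<delta> (f :: nat \<Rightarrow> real \<Rightarrow> real).
     \<tau> < \<delta> \<longrightarrow> \<delta> - \<tau> \<le> 1 \<longrightarrow> (\<forall>i<N. Linfty_on \<tau> \<delta> (f i)) \<longrightarrow>
     Inf {(\<Sum>i<N. (LINT s:{\<tau>..\<delta>}|lebesgue. \<bar>l' s\<bar> powr \<alpha> i * \<bar>f i s\<bar> powr p i)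
                      powr (1 / p i)) | l l'. admissible_cutoff \<tau> \<delta> l l'}
     \<le> C * (\<delta> - \<tau>) powr (- (MAX i\<in>{..<N}. (\<alpha> i - 1) / p i) - 1 / (MIN i\<in>{..<N}. \<beta> i))
         * (\<Sum>i<N. (LINT s:{\<tau>..\<delta>}|lebesgue. \<bar>f i s\<bar> powr \<beta> i) powr (1 / \<beta> i))"
proof -
  define K where "K i = 2 powr ((\<alpha> i - 1) / p i) * (2 * real N) powr (1 / \<beta> i)" for i
  define C where "C = 1 + (\<Sum>i<N. K i)"
  have "0 < C"
    unfolding C_def K_def by (simp add: add_pos_nonneg sum_nonneg)
  moreover have "K i \<le> C" if "i < N" for i
    unfolding C_def using member_le_sum[of i "{..<N}" K] that by (simp add: K_def)
  moreover have "0 < p i" if "i < N" for i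
    using assms(2)[OF that] by linarith
  ultimately show ?thesis
    using assms(1,3) neg_Max_minus_inverse_Min_le[of _ N \<beta> "\<lambda>i. (\<alpha> i - 1) / p i"] unfolding K_def
    by (intro exI[of _ C] conjI allI impI Inf_cutoff_energies_le_powr) auto
qed

end
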